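(* Let $f:\mathbb{R}^{m\times n}\to\mathbb{R}$ be $L$-smooth, i.e. $f({\bm X})\le f({\bm Y})+\langle\nabla f({\bm Y}),{\bm X}-{\bm Y}\rangle+\frac L2\|{\bm X}-{\bm Y}\|_F^2$ for all ${\bm X},{\bm Y}$, and let $f_*:=\inf_{{\bm X}}f({\bm X})>-\infty$. Let $d=\min\{m,n\}$, $\alpha\in(1,2]$, $\sigma>0$, and consider the iteration ${\bm X}_{k+1}={\bm X}_k-\eta\,\mathcal{C}_\tau({\bm G}_k)$, $k=0,1,\dots$, where $\mathbb{E}[{\bm G}_k\mid{\bm X}_k]=\nabla f({\bm X}_k)$ and $\mathbb{E}[\|{\bm G}_k-\nabla f({\bm X}_k)\|_F^\alpha\mid{\bm X}_k]\le\sigma^\alpha$. Suppose the constant step size satisfies $\eta\le\frac{1}{4dL}$ and the threshold satisfies $\tau\ge\max\{2,8\sigma\}$. Then for every $K\ge1$, $$\min_{0\le k\le K-1}\mathbb{E}\big[\phi(\|\nabla f({\bm X}_k)\|_F)\big]\le\frac{4(f({\bm X}_0)-f_* )}{\eta K}+32\,\tau^{-2(\alpha-1)}\sigma^{2\alpha}+8\eta dL\,\tau^{2-\alpha}\sigma^\alpha,$$ where $\phi(t):=\min\{t,t^2\}$.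
   Context: $\|\cdot\|_F$ is the Frobenius norm and $\langle\cdot,\cdot\rangle$ the Frobenius inner product. Spectral clipping: for ${\bm G}\in\mathbb{R}^{m\times n}$ with (thin) SVD ${\bm G}={\bm U}\,\mathrm{diag}(\sigma_1,\dots,\sigma_d){\bm V}^\top$, $d=\min\{m,n\}$, and threshold $\tau>0$, define $\mathcal{C}_\tau({\bm G}):={\bm U}\,\mathrm{diag}(\min\{\sigma_1,\tau\},\dots,\min\{\sigma_d,\tau\}){\bm V}^\top$. *)

theory Defs
  imports "HOL-Analysis.Analysis" "HOL-Probability.Probability"
begin

text \<open>Matrices in R^(m x n) are modelled as real^'n^'m. On this type the library inner
product is the Frobenius inner product and the library norm is the Frobenius norm.\<close>

definition outer :: "real^'m \<Rightarrow> real^'n \<Rightarrow> real^'n^'m" where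
  "outer u v = (\<chi> i j. u $ i * v $ j)"

definition is_thin_svd :: "real^'n::finite^'m::finite \<Rightarrow> (nat \<Rightarrow> real) \<Rightarrow> (nat \<Rightarrow> real^'m) \<Rightarrow> (nat \<Rightarrow> real^'n) \<Rightarrow> bool" where
  "is_thin_svd G s u v \<longleftrightarrow>
     (let d = min CARD('m) CARD('n) in
       (\<forall>i<d. 0 \<le> s i) \<and>
       (\<forall>i<d. \<forall>j<d. u i \<bullet> u j = (if i = j then 1 else 0)) \<and>
       (\<forall>i<d. \<forall>j<d. v i \<bullet> v j = (if i = j then 1 else 0)) \<and>
       G = (\<Sum>i<d. s i *\<^sub>R outer (u i) (v i)))"

definition spec_clip :: "real \<Rightarrow> real^'n::finite^'m::finite \<Rightarrow> real^'n^'m" where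
  "spec_clip \<tau> G = (SOME C. \<exists>s u v. is_thin_svd G s u v \<and>
      C = (\<Sum>i<min CARD('m) CARD('n). min (s i) \<tau> *\<^sub>R outer (u i) (v i)))"

definition phi :: "real \<Rightarrow> real" where
  "phi t = min t (t\<^sup>2)"

end

theory Submission
  imports Defs
begin

text \<open>
  By \<open>L\<close>-smoothness, the step \<open>X (k+1) = X k - \<eta> C\<^sub>\<tau>(G k)\<close> decreases \<open>f\<close> by at least
  \<open>\<eta> (g \<bullet> C\<^sub>\<tau>(G k) - L \<eta> / 2 \<parallel>C\<^sub>\<tau>(G k)\<parallel>\<^sup>2)\<close>, where \<open>g = \<nabla>f(X k)\<close>.
  Spectral clipping is the Frobenius-nearest point of the spectral-norm ball of radius \<open>\<tau>\<close>
  (for any SVD, which we construct greedily), so it is nonexpansive and satisfies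
  \<open>g \<bullet> C\<^sub>\<tau>(g) \<ge> \<parallel>g\<parallel> min \<parallel>g\<parallel> \<tau>\<close> and \<open>\<parallel>C\<^sub>\<tau>(G)\<parallel>\<^sup>2 \<le> d \<tau>\<^sup>2\<close>. Comparing \<open>C\<^sub>\<tau>(G k)\<close> with
  \<open>C\<^sub>\<tau>(g)\<close>, and interpolating between the two bounds \<open>\<parallel>G k - g\<parallel>\<close> and \<open>2 sqrt d \<tau>\<close> on
  their distance, bounds the gain pointwise below by \<open>\<phi>(\<parallel>g\<parallel>)/4\<close> minus a constant, up to two
  correction terms: a bounded \<open>\<sigma>(X k)\<close>-measurable multiple of the noise \<open>G k - g\<close>, which has
  mean zero by unbiasedness, and a nonnegative \<open>\<sigma>(X k)\<close>-measurable weight times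
  \<open>\<sigma>\<^sup>\<alpha> - \<parallel>G k - g\<parallel>\<^sup>\<alpha>\<close>, which has nonnegative mean by the moment bound. Summing the
  expected gains telescopes \<open>f\<close>.
\<close>

section \<open>Rank-one matrices and orthonormal families\<close>

lemma outer_inner: "outer a b \<bullet> Y = a \<bullet> (Y *v b)"
  unfolding outer_def inner_vec_def matrix_vector_mult_def
  by (simp add: sum_distrib_left mult_ac)

lemma outer_mult_vec: "outer a b *v y = (b \<bullet> y) *\<^sub>R a"
  unfolding outer_def inner_vec_def matrix_vector_mult_def
  by (simp add: vec_eq_iff sum_distrib_left sum_distrib_right mult_ac)

lemma vector_mult_outer: "z v* outer a b = (z \<bullet> a) *\<^sub>R b"
  unfolding outer_def inner_vec_def vector_matrix_mult_def
  by (simp add: vec_eq_iff sum_distrib_left sum_distrib_right mult_ac)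

lemma inner_outer_outer: "outer a b \<bullet> outer c e = (a \<bullet> c) * (b \<bullet> e)"
  by (simp add: outer_inner outer_mult_vec inner_commute)

lemma norm_matrix_vector_mult_le: "norm ((A::real^'n^'m) *v y) \<le> norm A * norm y"
proof -
  have "norm (A *v y) ^ 2 = (\<Sum>i\<in>UNIV. (A$i \<bullet> y)^2)"
    unfolding matrix_vector_mult_def
    by (simp add: norm_vec_def L2_set_def inner_vec_def real_sqrt_pow2 sum_nonneg)
  also have "\<dots> \<le> (\<Sum>i\<in>UNIV. (norm (A$i))^2 * (norm y)^2)"
    by (intro sum_mono) (metis Cauchy_Schwarz_ineq power2_norm_eq_inner)
  also have "\<dots> = (norm A * norm y)^2"
    by (simp add: norm_vec_def L2_set_def real_sqrt_pow2 sum_nonneg power_mult_distrib sum_distrib_right)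
  finally show ?thesis
    by (rule power2_le_imp_le) simp
qed

lemma power2_norm_diff:
  "(norm (a - b))^2 = (norm a)^2 - 2 * (a \<bullet> b) + (norm (b::'a::real_inner))^2"
  by (simp add: power2_norm_eq_inner inner_diff_left inner_diff_right inner_commute)

lemma eq_scaleR_if_norm_le_inner:
  fixes a x :: "'a::real_inner"
  assumes "norm x = 1" and "norm a \<le> x \<bullet> a"
  shows "a = (x \<bullet> a) *\<^sub>R x"
proof -
  have "(norm (a - (x \<bullet> a) *\<^sub>R x))^2 = (norm a)^2 - (x \<bullet> a)^2"
    unfolding power2_norm_diff using assms(1) by (simp add: inner_commute power2_eq_square)
  also have "\<dots> \<le> 0"
    using power_mono[OF assms(2) norm_ge_zero, of 2] by simp
  finally show ?thesis by simp
qed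

definition orthonormal_upto :: "(nat \<Rightarrow> 'a::real_inner) \<Rightarrow> nat \<Rightarrow> bool" where
  "orthonormal_upto u j \<longleftrightarrow> (\<forall>i<j. \<forall>l<j. u i \<bullet> u l = (if i = l then 1 else 0))"

lemma orthonormal_upto_norm: "orthonormal_upto u j \<Longrightarrow> i < j \<Longrightarrow> norm (u i) = 1"
  unfolding orthonormal_upto_def by (simp add: norm_eq_1)

lemma orthonormal_upto_extend:
  assumes "orthonormal_upto u j" and "norm x = 1" and "\<forall>i<j. x \<bullet> u i = 0"
  shows "orthonormal_upto (u(j := x)) (Suc j)"
  unfolding orthonormal_upto_def
proof (intro allI impI)
  fix i l assume "i < Suc j" "l < Suc j"
  then show "(u(j := x)) i \<bullet> (u(j := x)) l = (if i = l then 1 else 0)"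
    using assms unfolding orthonormal_upto_def
    by (cases "i = j"; cases "l = j") (simp_all add: inner_commute less_Suc_eq norm_eq_1)
qed

lemma inner_sum_orthonormal:
  assumes "orthonormal_upto u j"
  shows "(\<Sum>i<j. a i *\<^sub>R u i) \<bullet> (\<Sum>l<j. b l *\<^sub>R u l) = (\<Sum>i<j. a i * b i)"
proof -
  have "(a i *\<^sub>R u i) \<bullet> (\<Sum>l<j. b l *\<^sub>R u l) = (\<Sum>l<j. a i * b l * (u i \<bullet> u l))" for i
    by (simp add: inner_sum_right mult_ac)
  then have "(\<Sum>i<j. a i *\<^sub>R u i) \<bullet> (\<Sum>l<j. b l *\<^sub>R u l) = (\<Sum>i<j. \<Sum>l<j. a i * b l * (u i \<bullet> u l))"
    by (simp add: inner_sum_left)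
  also have "\<dots> = (\<Sum>i<j. \<Sum>l<j. if i = l then a i * b i else 0)"
    using assms by (intro sum.cong refl) (auto simp: orthonormal_upto_def)
  finally show ?thesis by simp
qed

lemma bessel_inequality:
  assumes "orthonormal_upto u j"
  shows "(\<Sum>i<j. (x \<bullet> u i)^2) \<le> (norm x)^2"
proof -
  define y where "y = (\<Sum>i<j. (x \<bullet> u i) *\<^sub>R u i)"
  have yy: "y \<bullet> y = (\<Sum>i<j. (x \<bullet> u i)^2)"
    unfolding y_def using inner_sum_orthonormal[OF assms] by (simp add: power2_eq_square)
  have xy: "x \<bullet> y = (\<Sum>i<j. (x \<bullet> u i)^2)"
    unfolding y_def by (simp add: inner_sum_right power2_eq_square)
  have "0 \<le> (norm (x - y))^2" by simp
  also have "\<dots> = (norm x)^2 - (\<Sum>i<j. (x \<bullet> u i)^2)"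
    unfolding power2_norm_diff using xy yy by (simp add: power2_norm_eq_inner)
  finally show ?thesis by simp
qed

lemma orthonormal_upto_outer:
  "orthonormal_upto u j \<Longrightarrow> orthonormal_upto v j \<Longrightarrow> orthonormal_upto (\<lambda>i. outer (u i) (v i)) j"
  unfolding orthonormal_upto_def by (simp add: inner_outer_outer)

lemma span_orthonormal_upto_CARD:
  fixes u :: "nat \<Rightarrow> real^'k"
  assumes u: "orthonormal_upto u CARD('k)"
  shows "span (u ` {..<CARD('k)}) = UNIV"
proof -
  let ?B = "u ` {..<CARD('k)}"
  have "inj_on u {..<CARD('k)}"
    using u unfolding orthonormal_upto_def by (intro inj_onI) (metis lessThan_iff zero_neq_one)
  then have card: "card ?B = CARD('k)" by (simp add: card_image)
  have "pairwise orthogonal ?B"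
    using u unfolding orthonormal_upto_def pairwise_def orthogonal_def by fastforce
  moreover have "0 \<notin> ?B"
    using u unfolding orthonormal_upto_def by force
  ultimately have "independent ?B" using pairwise_orthogonal_independent by blast
  then have "UNIV \<subseteq> span ?B" using card_eq_dim[of ?B UNIV] card by simp
  then show ?thesis by auto
qed

lemma exists_unit_orthogonal:
  fixes u :: "nat \<Rightarrow> real^'m"
  assumes "j < CARD('m)"
  obtains x where "norm x = 1" and "\<forall>i<j. x \<bullet> u i = 0"
proof -
  have "dim (u ` {..<j}) \<le> card (u ` {..<j})"
    by (rule dim_le_card) (auto intro: span_base)
  also have "\<dots> \<le> j" using card_image_le[of "{..<j}" u] by simp
  finally have "dim (u ` {..<j}) < DIM(real^'m)" using assms by simp
  then obtain x where x: "x \<noteq> 0" "\<And>y. y \<in> span (u ` {..<j}) \<Longrightarrow> orthogonal x y"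
    using orthogonal_to_subspace_exists by blast
  show thesis
  proof
    show "norm (x /\<^sub>R norm x) = 1" using x by simp
    show "\<forall>i<j. (x /\<^sub>R norm x) \<bullet> u i = 0"
      using x(2) by (auto intro: span_base simp: orthogonal_def)
  qed
qed

section \<open>Existence of a thin singular value decomposition\<close>

lemma deflate_mult_vec: "(A - c *\<^sub>R outer a b) *v z = A *v z - (c * (b \<bullet> z)) *\<^sub>R a"
  by (simp add: matrix_vector_mult_diff_rdistrib outer_mult_vec flip: scaleR_matrix_vector_assoc)

lemma vector_mult_deflate: "z v* (A - c *\<^sub>R outer a b) = z v* A - (c * (z \<bullet> a)) *\<^sub>R b"
  by (simp add: vector_matrix_mult_diff_rdistrib vector_scaleR_matrix_ac vector_mult_outer)

text \<open>A maximiser of \<open>x \<bullet> A y\<close> over unit vectors orthogonal to the singular vectors found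
  so far is the next singular pair of the deflated residual \<open>A\<close>.\<close>

lemma bilinear_attains_max_on_orthogonal_spheres:
  fixes A :: "real^'n^'m" and u :: "nat \<Rightarrow> real^'m" and v :: "nat \<Rightarrow> real^'n"
  assumes "j < CARD('m)" and "j < CARD('n)"
  obtains x y where "norm x = 1" "norm y = 1" "\<forall>i<j. x \<bullet> u i = 0" "\<forall>i<j. y \<bullet> v i = 0"
    and "\<forall>x' y'. norm x' = 1 \<longrightarrow> norm y' = 1 \<longrightarrow> (\<forall>i<j. x' \<bullet> u i = 0) \<longrightarrow> (\<forall>i<j. y' \<bullet> v i = 0)
           \<longrightarrow> x' \<bullet> (A *v y') \<le> x \<bullet> (A *v y)"
proof -
  define S where "S = (sphere 0 1 \<inter> (\<Inter>i<j. {x. u i \<bullet> x = 0})) \<times> (sphere 0 1 \<inter> (\<Inter>i<j. {y. v i \<bullet> y = 0}))"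
  have "compact S"
    unfolding S_def by (intro compact_Times compact_Int_closed compact_sphere closed_INT ballI closed_hyperplane)
  moreover obtain x0 y0 where "norm x0 = 1" "\<forall>i<j. x0 \<bullet> u i = 0" "norm y0 = 1" "\<forall>i<j. y0 \<bullet> v i = 0"
    using exists_unit_orthogonal[OF assms(1)] exists_unit_orthogonal[OF assms(2)] by metis
  then have "(x0, y0) \<in> S" unfolding S_def by (simp add: inner_commute)
  moreover have "continuous_on S (\<lambda>p. fst p \<bullet> (A *v snd p))"
    by (intro continuous_intros bounded_linear.continuous_on[OF matrix_vector_mul_bounded_linear])
  ultimately obtain p where "p \<in> S" and "\<And>q. q \<in> S \<Longrightarrow> fst q \<bullet> (A *v snd q) \<le> fst p \<bullet> (A *v snd p)"
    using continuous_attains_sup[of S "\<lambda>p. fst p \<bullet> (A *v snd p)"] by blast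
  then show thesis
    using that[of "fst p" "snd p"] unfolding S_def by (auto simp: inner_commute)
qed

lemma top_singular_pair_exists:
  fixes A :: "real^'n^'m" and u :: "nat \<Rightarrow> real^'m" and v :: "nat \<Rightarrow> real^'n"
  assumes "j < CARD('m)" and "j < CARD('n)"
    and Av: "\<forall>i<j. A *v v i = 0" and uA: "\<forall>i<j. u i v* A = 0"
  obtains s x y where "0 \<le> s" "norm x = 1" "norm y = 1" "\<forall>i<j. x \<bullet> u i = 0" "\<forall>i<j. y \<bullet> v i = 0"
    "A *v y = s *\<^sub>R x" "x v* A = s *\<^sub>R y"
proof -
  obtain x y where x1: "norm x = 1" and y1: "norm y = 1" and xu: "\<forall>i<j. x \<bullet> u i = 0"
    and yv: "\<forall>i<j. y \<bullet> v i = 0"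
    and "\<forall>x' y'. norm x' = 1 \<longrightarrow> norm y' = 1 \<longrightarrow> (\<forall>i<j. x' \<bullet> u i = 0) \<longrightarrow> (\<forall>i<j. y' \<bullet> v i = 0)
           \<longrightarrow> x' \<bullet> (A *v y') \<le> x \<bullet> (A *v y)"
    by (rule bilinear_attains_max_on_orthogonal_spheres[where A = A and u = u and v = v, OF assms(1,2)])
  note max = this(5)[rule_format]
  define s where "s = x \<bullet> (A *v y)"
  have "- s \<le> s" using max[of "- x" y] x1 y1 xu yv unfolding s_def by simp
  then have s0: "0 \<le> s" by simp
  have "norm (A *v y) \<le> s"
  proof (cases "A *v y = 0")
    case False
    define x' where "x' = (A *v y) /\<^sub>R norm (A *v y)"
    have "x' \<bullet> u i = 0" if "i < j" for i
      using uA that unfolding x'_def by (simp add: inner_commute flip: dot_lmul_matrix)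
    then have "x' \<bullet> (A *v y) \<le> s"
      unfolding s_def using False y1 yv by (intro max) (simp_all add: x'_def)
    moreover have "x' \<bullet> (A *v y) = norm (A *v y)"
      using False unfolding x'_def by (simp add: dot_square_norm power2_eq_square)
    ultimately show ?thesis by simp
  qed (use s0 in simp)
  then have Ay: "A *v y = s *\<^sub>R x"
    using eq_scaleR_if_norm_le_inner[OF x1, of "A *v y"] unfolding s_def by simp
  have "norm (x v* A) \<le> s"
  proof (cases "x v* A = 0")
    case False
    define y' where "y' = (x v* A) /\<^sub>R norm (x v* A)"
    have "y' \<bullet> v i = 0" if "i < j" for i
      using Av that unfolding y'_def by (simp add: dot_lmul_matrix)
    then have "x \<bullet> (A *v y') \<le> s"
      unfolding s_def using False x1 xu by (intro max) (simp_all add: y'_def)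
    moreover have "x \<bullet> (A *v y') = norm (x v* A)"
      using False unfolding y'_def
      by (simp add: matrix_vector_mult_scaleR dot_square_norm power2_eq_square flip: dot_lmul_matrix)
    ultimately show ?thesis by simp
  qed (use s0 in simp)
  moreover have "y \<bullet> (x v* A) = s"
    unfolding s_def by (metis dot_lmul_matrix inner_commute)
  ultimately have xA: "x v* A = s *\<^sub>R y"
    using eq_scaleR_if_norm_le_inner[OF y1, of "x v* A"] by simp
  show thesis using that s0 x1 y1 xu yv Ay xA by blast
qed

definition outer_sum :: "nat \<Rightarrow> (nat \<Rightarrow> real) \<Rightarrow> (nat \<Rightarrow> real^'m) \<Rightarrow> (nat \<Rightarrow> real^'n) \<Rightarrow> real^'n^'m" where
  "outer_sum j s u v = (\<Sum>i<j. s i *\<^sub>R outer (u i) (v i))"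

lemma outer_sum_Suc_upd:
  "outer_sum (Suc j) (s(j := c)) (u(j := x)) (v(j := y)) = outer_sum j s u v + c *\<^sub>R outer x y"
  unfolding outer_sum_def by (simp add: sum.lessThan_Suc)

definition partial_svd :: "real^'n^'m \<Rightarrow> nat \<Rightarrow> (nat \<Rightarrow> real) \<Rightarrow> (nat \<Rightarrow> real^'m) \<Rightarrow> (nat \<Rightarrow> real^'n) \<Rightarrow> bool" where
  "partial_svd A j s u v \<longleftrightarrow> (\<forall>i<j. 0 \<le> s i) \<and> orthonormal_upto u j \<and> orthonormal_upto v j \<and>
     (\<forall>i<j. (A - outer_sum j s u v) *v v i = 0) \<and> (\<forall>i<j. u i v* (A - outer_sum j s u v) = 0)"

lemma partial_svd_exists:
  fixes A :: "real^'n^'m"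
  assumes "j \<le> min CARD('m) CARD('n)"
  shows "\<exists>s u v. partial_svd A j s u v"
  using assms
proof (induction j)
  case 0
  show ?case by (simp add: partial_svd_def orthonormal_upto_def)
next
  case (Suc j)
  then obtain s u v where svd: "partial_svd A j s u v" by auto
  define R where "R = A - outer_sum j s u v"
  have "j < CARD('m)" "j < CARD('n)" "\<forall>i<j. R *v v i = 0" "\<forall>i<j. u i v* R = 0"
    using svd Suc.prems unfolding partial_svd_def R_def by auto
  then obtain c x y where c: "0 \<le> c" and x1: "norm x = 1" and y1: "norm y = 1"
    and xu: "\<forall>i<j. x \<bullet> u i = 0" and yv: "\<forall>i<j. y \<bullet> v i = 0"
    and Ry: "R *v y = c *\<^sub>R x" and xR: "x v* R = c *\<^sub>R y"
    by (rule top_singular_pair_exists[where A = R and u = u and v = v])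
  have residual: "A - outer_sum (Suc j) (s(j := c)) (u(j := x)) (v(j := y)) = R - c *\<^sub>R outer x y"
    unfolding outer_sum_Suc_upd R_def by simp
  have "(R - c *\<^sub>R outer x y) *v (v(j := y)) i = 0" if "i < Suc j" for i
    using that svd y1 yv Ry unfolding partial_svd_def R_def
    by (cases "i = j") (auto simp: deflate_mult_vec inner_commute norm_eq_1)
  moreover have "(u(j := x)) i v* (R - c *\<^sub>R outer x y) = 0" if "i < Suc j" for i
    using that svd x1 xu xR unfolding partial_svd_def R_def
    by (cases "i = j") (auto simp: vector_mult_deflate inner_commute norm_eq_1)
  ultimately have "partial_svd A (Suc j) (s(j := c)) (u(j := x)) (v(j := y))"
    using svd c x1 xu y1 yv unfolding partial_svd_def residual
    by (auto simp: orthonormal_upto_extend less_Suc_eq)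
  then show ?case by blast
qed

lemma matrix_eq_0_if_mult_orthonormal_basis:
  fixes A :: "real^'n^'m" and v :: "nat \<Rightarrow> real^'n"
  assumes "orthonormal_upto v CARD('n)" and "\<forall>i<CARD('n). A *v v i = 0"
  shows "A = 0"
proof -
  have "A *v z = 0" for z
    using linear_eq_0_on_span[of "(*v) A" "v ` {..<CARD('n)}" z] assms span_orthonormal_upto_CARD
    by auto
  then show ?thesis by (simp add: matrix_eq)
qed

lemma is_thin_svd_iff:
  "is_thin_svd (A::real^'n^'m) s u v \<longleftrightarrow>
     (let d = min CARD('m) CARD('n) in
       (\<forall>i<d. 0 \<le> s i) \<and> orthonormal_upto u d \<and> orthonormal_upto v d \<and> A = outer_sum d s u v)"
  unfolding is_thin_svd_def orthonormal_upto_def outer_sum_def ..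

lemma thin_svd_exists: "\<exists>s u v. is_thin_svd (A::real^'n^'m) s u v"
proof -
  define d where "d = min CARD('m) CARD('n)"
  obtain s u v where svd: "partial_svd A d s u v"
    using partial_svd_exists[of d A] unfolding d_def by auto
  define R where "R = A - outer_sum d s u v"
  have "R = 0"
  proof (cases "CARD('n) \<le> CARD('m)")
    case True
    then show ?thesis
      using svd matrix_eq_0_if_mult_orthonormal_basis[of v R]
      unfolding partial_svd_def R_def d_def by (simp add: min_absorb2)
  next
    case False
    then have "transpose R = 0"
      using svd matrix_eq_0_if_mult_orthonormal_basis[of u "transpose R"]
      unfolding partial_svd_def R_def d_def by simp
    then show ?thesis by (simp add: transpose_def vec_eq_iff)
  qed
  then have "is_thin_svd A s u v"
    using svd unfolding is_thin_svd_iff partial_svd_def R_def d_def Let_def by simp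
  then show ?thesis by blast
qed

section \<open>Spectral clipping as a projection\<close>

lemma outer_sum_diff: "outer_sum j a u v - outer_sum j b u v = outer_sum j (\<lambda>i. a i - b i) u v"
  unfolding outer_sum_def by (simp add: sum_subtractf scaleR_diff_left)

lemma inner_outer_sum_left: "outer_sum j a u v \<bullet> Y = (\<Sum>i<j. a i * (u i \<bullet> (Y *v v i)))"
  unfolding outer_sum_def by (simp add: inner_sum_left outer_inner)

lemma inner_outer_sum_outer_sum:
  assumes "orthonormal_upto u j" and "orthonormal_upto v j"
  shows "outer_sum j a u v \<bullet> outer_sum j b u v = (\<Sum>i<j. a i * b i)"
  unfolding outer_sum_def using inner_sum_orthonormal[OF orthonormal_upto_outer[OF assms]] .

text \<open>\<^const>\<open>spec_clip\<close> uses an arbitrary thin SVD, so its properties are proved for every one.\<close>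

lemma spec_clip_thin_svd:
  fixes G :: "real^'n^'m"
  defines "d \<equiv> min CARD('m) CARD('n)"
  obtains s u v where "\<forall>i<d. 0 \<le> s i" "orthonormal_upto u d" "orthonormal_upto v d"
    "G = outer_sum d s u v" "spec_clip \<tau> G = outer_sum d (\<lambda>i. min (s i) \<tau>) u v"
proof -
  obtain s u v where "is_thin_svd G s u v" using thin_svd_exists by blast
  then have "\<exists>C s u v. is_thin_svd G s u v \<and> C = (\<Sum>i<d. min (s i) \<tau> *\<^sub>R outer (u i) (v i))"
    by blast
  from someI_ex[OF this] show thesis
    using that unfolding spec_clip_def outer_sum_def is_thin_svd_iff d_def Let_def by blast
qed

text \<open>The ball of radius \<open>\<tau>\<close> in the spectral norm, written with the variational formula
  for the largest singular value.\<close>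

definition spectral_ball :: "real \<Rightarrow> (real^'n^'m) set" where
  "spectral_ball \<tau> = {Y. \<forall>x y. norm x = 1 \<longrightarrow> norm y = 1 \<longrightarrow> x \<bullet> (Y *v y) \<le> \<tau>}"

lemma spec_clip_in_spectral_ball:
  fixes G :: "real^'n^'m"
  assumes "0 \<le> \<tau>"
  shows "spec_clip \<tau> G \<in> spectral_ball \<tau>"
  unfolding spectral_ball_def
proof (intro CollectI allI impI)
  define d where "d = min CARD('m) CARD('n)"
  obtain s u v where s: "\<forall>i<d. 0 \<le> s i" and u: "orthonormal_upto u d" and v: "orthonormal_upto v d"
    and G: "G = outer_sum d s u v" and C: "spec_clip \<tau> G = outer_sum d (\<lambda>i. min (s i) \<tau>) u v"
    unfolding d_def by (rule spec_clip_thin_svd)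
  fix x :: "real^'m" and y :: "real^'n"
  assume x: "norm x = 1" and y: "norm y = 1"
  have "x \<bullet> (spec_clip \<tau> G *v y) = spec_clip \<tau> G \<bullet> outer x y"
    by (simp add: outer_inner inner_commute)
  also have "\<dots> = (\<Sum>i<d. min (s i) \<tau> * ((x \<bullet> u i) * (y \<bullet> v i)))"
    unfolding C inner_outer_sum_left by (simp add: outer_mult_vec inner_commute mult_ac)
  also have "\<dots> \<le> (\<Sum>i<d. \<tau> * (((x \<bullet> u i)^2 + (y \<bullet> v i)^2) / 2))"
  proof (intro sum_mono)
    fix i assume "i \<in> {..<d}"
    then have m: "0 \<le> min (s i) \<tau>" "min (s i) \<tau> \<le> \<tau>" using s assms by auto
    have "(x \<bullet> u i) * (y \<bullet> v i) \<le> ((x \<bullet> u i)^2 + (y \<bullet> v i)^2) / 2"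
      using sum_squares_bound[of "x \<bullet> u i" "y \<bullet> v i"] by (simp add: power2_eq_square)
    then have "min (s i) \<tau> * ((x \<bullet> u i) * (y \<bullet> v i)) \<le> min (s i) \<tau> * (((x \<bullet> u i)^2 + (y \<bullet> v i)^2) / 2)"
      using m(1) by (rule mult_left_mono)
    also have "\<dots> \<le> \<tau> * (((x \<bullet> u i)^2 + (y \<bullet> v i)^2) / 2)"
      using m(2) by (rule mult_right_mono) simp
    finally show "min (s i) \<tau> * ((x \<bullet> u i) * (y \<bullet> v i)) \<le> \<tau> * (((x \<bullet> u i)^2 + (y \<bullet> v i)^2) / 2)" .
  qed
  also have "\<dots> = \<tau> / 2 * ((\<Sum>i<d. (x \<bullet> u i)^2) + (\<Sum>i<d. (y \<bullet> v i)^2))"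
    by (simp add: sum.distrib sum_distrib_left distrib_left add_divide_distrib)
  also have "\<dots> \<le> \<tau> / 2 * (1 + 1)"
    using bessel_inequality[OF u, of x] bessel_inequality[OF v, of y] x y assms
    by (intro mult_left_mono add_mono) auto
  finally show "x \<bullet> (spec_clip \<tau> G *v y) \<le> \<tau>" by simp
qed

lemma spec_clip_variational_inequality:
  fixes G :: "real^'n^'m"
  assumes "Y \<in> spectral_ball \<tau>"
  shows "(G - spec_clip \<tau> G) \<bullet> (Y - spec_clip \<tau> G) \<le> 0"
proof -
  define d where "d = min CARD('m) CARD('n)"
  obtain s u v where s: "\<forall>i<d. 0 \<le> s i" and u: "orthonormal_upto u d" and v: "orthonormal_upto v d"
    and G: "G = outer_sum d s u v" and C: "spec_clip \<tau> G = outer_sum d (\<lambda>i. min (s i) \<tau>) u v"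
    unfolding d_def by (rule spec_clip_thin_svd)
  define p where "p i = s i - min (s i) \<tau>" for i
  have GC: "G - spec_clip \<tau> G = outer_sum d p u v"
    unfolding C p_def by (subst G) (rule outer_sum_diff)
  have "(G - spec_clip \<tau> G) \<bullet> Y \<le> (\<Sum>i<d. p i * \<tau>)"
    unfolding GC inner_outer_sum_left
  proof (intro sum_mono mult_left_mono)
    fix i assume "i \<in> {..<d}"
    then show "u i \<bullet> (Y *v v i) \<le> \<tau>"
      using assms orthonormal_upto_norm[OF u] orthonormal_upto_norm[OF v] unfolding spectral_ball_def by auto
    show "0 \<le> p i" unfolding p_def by simp
  qed
  moreover have "(G - spec_clip \<tau> G) \<bullet> spec_clip \<tau> G = (\<Sum>i<d. p i * \<tau>)"
    unfolding GC by (subst C, subst inner_outer_sum_outer_sum[OF u v]) (auto intro!: sum.cong simp: p_def min_def)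
  ultimately show ?thesis by (simp add: inner_diff_right)
qed

lemma norm_spec_clip_squared_le:
  fixes G :: "real^'n^'m"
  assumes "0 \<le> \<tau>"
  shows "(norm (spec_clip \<tau> G))^2 \<le> real (min CARD('m) CARD('n)) * \<tau>^2"
proof -
  define d where "d = min CARD('m) CARD('n)"
  obtain s u v where s: "\<forall>i<d. 0 \<le> s i" and u: "orthonormal_upto u d" and v: "orthonormal_upto v d"
    and G: "G = outer_sum d s u v" and C: "spec_clip \<tau> G = outer_sum d (\<lambda>i. min (s i) \<tau>) u v"
    unfolding d_def by (rule spec_clip_thin_svd)
  have "(norm (spec_clip \<tau> G))^2 = (\<Sum>i<d. min (s i) \<tau> * min (s i) \<tau>)"
    unfolding power2_norm_eq_inner C by (rule inner_outer_sum_outer_sum[OF u v])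
  also have "\<dots> \<le> (\<Sum>i<d. \<tau> * \<tau>)"
    using s assms by (intro sum_mono mult_mono) auto
  finally show ?thesis by (simp add: d_def power2_eq_square)
qed

lemma norm_spec_clip_le_sqrt:
  fixes G :: "real^'n^'m"
  assumes "0 \<le> \<tau>"
  shows "norm (spec_clip \<tau> G) \<le> sqrt (real (min CARD('m) CARD('n))) * \<tau>"
  using real_sqrt_le_mono[OF norm_spec_clip_squared_le[OF assms, of G]] assms
  by (simp add: real_sqrt_mult)

lemma in_spectral_ball_if_norm_le:
  fixes Y :: "real^'n^'m"
  assumes "norm Y \<le> \<tau>"
  shows "Y \<in> spectral_ball \<tau>"
  unfolding spectral_ball_def
proof (intro CollectI allI impI)
  fix x :: "real^'m" and y :: "real^'n"
  assume "norm x = 1" "norm y = 1"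
  then have "x \<bullet> (Y *v y) \<le> norm Y"
    using norm_cauchy_schwarz[of x "Y *v y"] norm_matrix_vector_mult_le[of Y y] by simp
  then show "x \<bullet> (Y *v y) \<le> \<tau>" using assms by simp
qed

lemma spec_clip_eq_self:
  fixes Y :: "real^'n^'m"
  assumes "Y \<in> spectral_ball \<tau>"
  shows "spec_clip \<tau> Y = Y"
proof -
  have "(Y - spec_clip \<tau> Y) \<bullet> (Y - spec_clip \<tau> Y) = 0"
    using spec_clip_variational_inequality[OF assms, of Y] inner_ge_zero by (meson antisym)
  then show ?thesis by simp
qed

lemma spec_clip_nearest:
  fixes A :: "real^'n^'m"
  assumes "Y \<in> spectral_ball \<tau>"
  shows "norm (A - spec_clip \<tau> A) \<le> norm (A - Y)"
proof -
  let ?C = "spec_clip \<tau> A"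
  have "(norm (A - Y))^2 = (norm (A - ?C))^2 - 2 * ((A - ?C) \<bullet> (Y - ?C)) + (norm (Y - ?C))^2"
    using power2_norm_diff[of "A - ?C" "Y - ?C"] by simp
  then have "(norm (A - ?C))^2 \<le> (norm (A - Y))^2"
    using spec_clip_variational_inequality[OF assms, of A] zero_le_power2[of "norm (Y - ?C)"] by linarith
  then show ?thesis by (rule power2_le_imp_le) simp
qed

lemma spec_clip_nonexpansive:
  fixes A B :: "real^'n^'m"
  assumes "0 \<le> \<tau>"
  shows "norm (spec_clip \<tau> A - spec_clip \<tau> B) \<le> norm (A - B)"
proof -
  let ?a = "spec_clip \<tau> A" and ?b = "spec_clip \<tau> B"
  have "(A - ?a) \<bullet> (?b - ?a) \<le> 0" "(B - ?b) \<bullet> (?a - ?b) \<le> 0"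
    using spec_clip_variational_inequality spec_clip_in_spectral_ball[OF assms] by blast+
  moreover have "(A - B) \<bullet> (?a - ?b) - (norm (?a - ?b))^2 = - ((A - ?a) \<bullet> (?b - ?a)) - (B - ?b) \<bullet> (?a - ?b)"
    unfolding power2_norm_eq_inner inner_diff_left inner_diff_right by (simp add: inner_commute)
  ultimately have "(norm (?a - ?b))^2 \<le> (A - B) \<bullet> (?a - ?b)" by linarith
  also have "\<dots> \<le> norm (A - B) * norm (?a - ?b)" by (rule norm_cauchy_schwarz)
  finally show ?thesis
    by (cases "?a = ?b") (auto simp: power2_eq_square)
qed

lemma norm_spec_clip_le:
  fixes A :: "real^'n^'m"
  assumes "0 \<le> \<tau>"
  shows "norm (spec_clip \<tau> A) \<le> norm A"
proof -
  have "spec_clip \<tau> (0::real^'n^'m) = 0"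
    using assms by (intro spec_clip_eq_self in_spectral_ball_if_norm_le) simp
  then show ?thesis using spec_clip_nonexpansive[OF assms, of A 0] by simp
qed

lemma spec_clip_borel_measurable:
  assumes "0 \<le> \<tau>"
  shows "(spec_clip \<tau> :: real^'n^'m \<Rightarrow> _) \<in> borel_measurable borel"
proof (intro borel_measurable_continuous_onI lipschitz_on_continuous_on)
  show "1-lipschitz_on UNIV (spec_clip \<tau> :: real^'n^'m \<Rightarrow> _)"
    using spec_clip_nonexpansive[OF assms] by (intro lipschitz_onI) (auto simp: dist_norm)
qed

text \<open>Compare with the radial truncation \<open>min 1 (\<tau> / \<parallel>g\<parallel>) g\<close>, which lies in the ball.\<close>

lemma inner_spec_clip_ge:
  fixes g :: "real^'n^'m"
  assumes "0 \<le> \<tau>"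
  shows "norm g * min (norm g) \<tau> \<le> g \<bullet> spec_clip \<tau> g"
proof (cases "g = 0")
  case False
  define r where "r = norm g"
  define c where "c = min 1 (\<tau> / r)"
  let ?C = "spec_clip \<tau> g"
  have r: "0 < r" using False unfolding r_def by simp
  have c: "0 \<le> c" "c \<le> 1" "c * r = min r \<tau>"
    unfolding c_def using r assms by (auto simp: min_def field_simps)
  have "c *\<^sub>R g \<in> spectral_ball \<tau>"
    using c assms unfolding r_def by (intro in_spectral_ball_if_norm_le) simp
  then have "norm (g - ?C) \<le> norm (g - c *\<^sub>R g)" by (rule spec_clip_nearest)
  also have "g - c *\<^sub>R g = (1 - c) *\<^sub>R g" by (simp add: scaleR_diff_left)
  also have "norm \<dots> = (1 - c) * r" using c unfolding r_def by simp
  finally have near: "norm (g - ?C) \<le> (1 - c) * r" .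
  then have far: "c * r \<le> norm ?C"
    using norm_triangle_ineq2[of g "g - ?C"] unfolding r_def by (simp add: algebra_simps)
  have "2 * (g \<bullet> ?C) = r^2 + (norm ?C)^2 - (norm (g - ?C))^2"
    using power2_norm_diff[of g ?C] unfolding r_def by simp
  also have "\<dots> \<ge> r^2 + (c * r)^2 - ((1 - c) * r)^2"
    using near far c r assms by (intro diff_mono add_left_mono power_mono) auto
  finally have "c * r * r \<le> g \<bullet> ?C" by (simp add: power2_eq_square algebra_simps)
  then show ?thesis using c unfolding r_def by (simp add: mult.commute)
qed simp

section \<open>Pointwise lower bound on the descent gain\<close>

lemma power2_le_powr_mult_powr:
  fixes t a b \<alpha> :: real
  assumes "0 \<le> t" "t \<le> a" "t \<le> b" "0 \<le> \<alpha>" "\<alpha> \<le> 2"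
  shows "t^2 \<le> a powr \<alpha> * b powr (2 - \<alpha>)"
proof -
  have "t^2 = t powr (\<alpha> + (2 - \<alpha>))"
    using assms(1) by simp
  also have "\<dots> = t powr \<alpha> * t powr (2 - \<alpha>)"
    by (rule powr_add)
  also have "\<dots> \<le> a powr \<alpha> * b powr (2 - \<alpha>)"
    using assms by (intro mult_mono powr_mono2) auto
  finally show ?thesis .
qed

lemma le_powr_mult_powr_one_minus:
  fixes n c \<alpha> :: real
  assumes "0 < c" "c \<le> n" "1 \<le> \<alpha>"
  shows "n \<le> n powr \<alpha> * c powr (1 - \<alpha>)"
proof -
  have "n powr \<alpha> = n * n powr (\<alpha> - 1)"
    using powr_add[of n 1 "\<alpha> - 1"] assms by simp
  moreover have "c powr (1 - \<alpha>) = 1 / c powr (\<alpha> - 1)"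
    using powr_minus_divide[of c "\<alpha> - 1"] by simp
  ultimately have "n powr \<alpha> * c powr (1 - \<alpha>) = n * (n / c) powr (\<alpha> - 1)"
    using assms by (simp add: powr_divide)
  moreover have "1 \<le> (n / c) powr (\<alpha> - 1)"
    using assms by (intro ge_one_powr_ge_zero) auto
  ultimately show ?thesis
    using assms mult_left_mono[of 1 "(n / c) powr (\<alpha> - 1)" n] by simp
qed

lemma le_add_powr_mult_powr_one_minus:
  fixes n c \<alpha> :: real
  assumes "0 \<le> n" "0 < c" "1 \<le> \<alpha>"
  shows "n \<le> c + n powr \<alpha> * c powr (1 - \<alpha>)"
proof (cases "n \<le> c")
  case True
  then show ?thesis by (simp add: add_increasing2)
next
  case False
  then show ?thesis using le_powr_mult_powr_one_minus[of c n \<alpha>] assms by simp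
qed

lemma half_powr_mult_powr_squared_le:
  fixes \<tau> \<sigma> \<alpha> :: real
  assumes "0 < \<tau>" "0 < \<sigma>" "1 \<le> \<alpha>" "\<alpha> \<le> 2"
  shows "((\<tau> / 2) powr (1 - \<alpha>) * \<sigma> powr \<alpha>)^2 \<le> 4 * (\<tau> powr (- 2 * (\<alpha> - 1)) * \<sigma> powr (2 * \<alpha>))"
proof -
  have "(2::real) powr (1 - \<alpha>) = 1 / 2 powr (\<alpha> - 1)"
    using powr_minus_divide[of "2::real" "\<alpha> - 1"] by simp
  then have "(\<tau> / 2) powr (1 - \<alpha>) = \<tau> powr (1 - \<alpha>) * 2 powr (\<alpha> - 1)"
    by (simp add: powr_divide)
  then have "((\<tau> / 2) powr (1 - \<alpha>) * \<sigma> powr \<alpha>)^2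
      = 2 powr (2 * (\<alpha> - 1)) * (\<tau> powr (- 2 * (\<alpha> - 1)) * \<sigma> powr (2 * \<alpha>))"
    using assms by (simp add: powr_power algebra_simps)
  also have "\<dots> \<le> 2 powr 2 * (\<tau> powr (- 2 * (\<alpha> - 1)) * \<sigma> powr (2 * \<alpha>))"
    using assms by (intro mult_right_mono powr_mono) auto
  finally show ?thesis by simp
qed

lemma two_sqrt_mult_powr_le:
  fixes d \<tau> \<alpha> :: real
  assumes "1 \<le> d" "0 < \<tau>" "1 \<le> \<alpha>" "\<alpha> \<le> 2"
  shows "(2 * sqrt d * \<tau>) powr (2 - \<alpha>) \<le> 2 * d * \<tau> powr (2 - \<alpha>)"
proof -
  have one: "1 \<le> 2 * sqrt d" using real_sqrt_ge_one[of d] assms by linarith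
  have "sqrt d * 1 \<le> sqrt d * sqrt d" using assms by (intro mult_left_mono) auto
  then have "sqrt d \<le> d" using assms by simp
  then have "(2 * sqrt d) powr (2 - \<alpha>) \<le> 2 * d"
    using powr_mono[of "2 - \<alpha>" 1 "2 * sqrt d"] one assms by simp
  then show ?thesis
    using mult_right_mono[of _ _ "\<tau> powr (2 - \<alpha>)"] assms by (simp add: powr_mult)
qed

lemma norm_spec_clip_squared_le_perturbed:
  fixes g G :: "real^'n^'m"
  defines "d \<equiv> real (min CARD('m) CARD('n))"
  assumes "0 < \<tau>" "1 \<le> \<alpha>" "\<alpha> \<le> 2"
  shows "(norm (spec_clip \<tau> G))^2
    \<le> 2 * (norm (spec_clip \<tau> g))^2 + 4 * d * \<tau> powr (2 - \<alpha>) * norm (G - g) powr \<alpha>"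
proof -
  let ?C = "spec_clip \<tau> G" and ?P = "spec_clip \<tau> g"
  define t where "t = norm (?C - ?P)"
  have "1 \<le> d" unfolding d_def by simp
  have "t \<le> norm (G - g)"
    unfolding t_def using assms by (intro spec_clip_nonexpansive) simp
  moreover have "t \<le> 2 * sqrt d * \<tau>"
    using norm_triangle_ineq4[of ?C ?P] norm_spec_clip_le_sqrt[of \<tau> G] norm_spec_clip_le_sqrt[of \<tau> g] assms
    unfolding t_def d_def by simp
  ultimately have "t^2 \<le> norm (G - g) powr \<alpha> * (2 * sqrt d * \<tau>) powr (2 - \<alpha>)"
    using assms by (intro power2_le_powr_mult_powr) (auto simp: t_def)
  also have "\<dots> \<le> norm (G - g) powr \<alpha> * (2 * d * \<tau> powr (2 - \<alpha>))"
    using assms \<open>1 \<le> d\<close> by (intro mult_left_mono two_sqrt_mult_powr_le) auto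
  finally have t: "t^2 \<le> 2 * d * \<tau> powr (2 - \<alpha>) * norm (G - g) powr \<alpha>" by (simp add: mult_ac)
  have "norm ?C \<le> norm ?P + t"
    unfolding t_def using norm_triangle_ineq2[of ?C ?P] by simp
  then have "(norm ?C)^2 \<le> (norm ?P + t)^2" by (intro power_mono) auto
  also have "\<dots> \<le> 2 * (norm ?P)^2 + 2 * t^2"
    using sum_squares_bound[of "norm ?P" t] by (simp add: power2_eq_square algebra_simps)
  finally show ?thesis using t by simp
qed

text \<open>For \<open>\<kappa> = L \<eta>\<close>, \<open>\<eta> * descent_gain \<tau> \<kappa> (\<nabla>f X) G\<close> is the decrease of \<open>f\<close> that
  \<open>L\<close>-smoothness guarantees for the step from \<open>X\<close> to \<open>X - \<eta> C\<^sub>\<tau>(G)\<close>.\<close>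

definition descent_gain :: "real \<Rightarrow> real \<Rightarrow> real^'n^'m \<Rightarrow> real^'n^'m \<Rightarrow> real" where
  "descent_gain \<tau> \<kappa> g G = g \<bullet> spec_clip \<tau> G - \<kappa> / 2 * (norm (spec_clip \<tau> G))^2"

lemma phi_le: "phi t \<le> t" "phi t \<le> t^2"
  unfolding phi_def by simp_all

lemma norm_spec_clip_squared_le_min:
  fixes g :: "real^'n^'m" and \<tau> \<kappa> :: real
  defines "d \<equiv> real (min CARD('m) CARD('n))"
  assumes "0 \<le> \<tau>" and kappa: "0 \<le> \<kappa>" "4 * d * \<kappa> \<le> 1"
  shows "\<kappa> * (norm (spec_clip \<tau> g))^2 \<le> norm g * min (norm g) \<tau> / 4"
proof -
  let ?P = "spec_clip \<tau> g"
  define r where "r = norm g"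
  have "1 \<le> d" unfolding d_def by simp
  have "\<kappa> * (norm ?P)^2 \<le> \<kappa> * d * \<tau>^2"
    using mult_left_mono[OF norm_spec_clip_squared_le[OF \<open>0 \<le> \<tau>\<close>, of g] kappa(1)]
    unfolding d_def by (simp add: mult_ac)
  also have "\<dots> \<le> \<tau>^2 / 4"
    using mult_right_mono[OF kappa(2) zero_le_power2[of \<tau>]] by (simp add: mult_ac)
  finally have "\<kappa> * (norm ?P)^2 \<le> \<tau>^2 / 4" .
  moreover have "\<kappa> * (norm ?P)^2 \<le> r^2 / 4"
  proof -
    have "4 * \<kappa> * 1 \<le> 4 * \<kappa> * d"
      using kappa \<open>1 \<le> d\<close> by (intro mult_left_mono) auto
    then have "4 * \<kappa> \<le> 1" using kappa by (simp add: mult_ac)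
    moreover have "(norm ?P)^2 \<le> r^2"
      using norm_spec_clip_le[OF \<open>0 \<le> \<tau>\<close>, of g] unfolding r_def by (intro power_mono) auto
    ultimately show ?thesis
      using mult_mono[of "4 * \<kappa>" 1 "(norm ?P)^2" "r^2"] kappa by simp
  qed
  ultimately have "\<kappa> * (norm ?P)^2 \<le> min (r^2) (\<tau>^2) / 4" by (simp add: min_def)
  also have "min (r^2) (\<tau>^2) \<le> r * min r \<tau>"
  proof (cases "r \<le> \<tau>")
    case True
    then show ?thesis by (simp add: power2_eq_square)
  next
    case False
    then have "\<tau>^2 \<le> r * \<tau>" using \<open>0 \<le> \<tau>\<close> by (simp add: power2_eq_square mult_right_mono)
    then show ?thesis using False by simp
  qed
  finally show ?thesis unfolding r_def by simp
qed

lemma descent_gain_small_gradient: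
  fixes g G :: "real^'n^'m" and \<tau> \<sigma> \<alpha> \<kappa> :: real
  defines "d \<equiv> real (min CARD('m) CARD('n))"
    and "cQ \<equiv> 2 * \<kappa> * real (min CARD('m) CARD('n)) * \<tau> powr (2 - \<alpha>)"
    and "T \<equiv> \<tau> powr (- 2 * (\<alpha> - 1)) * \<sigma> powr (2 * \<alpha>)"
  assumes small: "norm g \<le> \<tau> / 2"
    and tau: "0 < \<tau>" and sigma: "0 < \<sigma>" and alpha: "1 \<le> \<alpha>" "\<alpha> \<le> 2"
    and kappa: "0 \<le> \<kappa>" "4 * d * \<kappa> \<le> 1"
  shows "phi (norm g) / 4 - (2 * T + cQ * \<sigma> powr \<alpha>) + g \<bullet> (G - g)
      + (norm g * (\<tau> / 2) powr (1 - \<alpha>) + cQ) * (\<sigma> powr \<alpha> - norm (G - g) powr \<alpha>)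
    \<le> descent_gain \<tau> \<kappa> g G"
proof -
  let ?C = "spec_clip \<tau> G"
  define r where "r = norm g"
  define n where "n = norm (G - g)"
  define b where "b = (\<tau> / 2) powr (1 - \<alpha>)"
  have g_ball: "g \<in> spectral_ball \<tau>"
    using small tau by (intro in_spectral_ball_if_norm_le) simp
  have clip_error: "norm (G - ?C) \<le> n powr \<alpha> * b"
  proof (cases "n \<le> \<tau> / 2")
    case True
    then have "norm G \<le> \<tau>"
      using small norm_triangle_ineq[of g "G - g"] unfolding n_def by simp
    then have "?C = G" by (intro spec_clip_eq_self in_spectral_ball_if_norm_le)
    then show ?thesis unfolding b_def n_def by simp
  next
    case False
    have "norm (G - ?C) \<le> n" unfolding n_def by (rule spec_clip_nearest[OF g_ball])
    also have "n \<le> n powr \<alpha> * b"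
      unfolding b_def using False tau alpha by (intro le_powr_mult_powr_one_minus) auto
    finally show ?thesis .
  qed
  have "g \<bullet> (G - ?C) \<le> r * norm (G - ?C)" unfolding r_def by (rule norm_cauchy_schwarz)
  also have "\<dots> \<le> r * (n powr \<alpha> * b)" using clip_error by (rule mult_left_mono) (simp add: r_def)
  finally have linear: "r^2 + g \<bullet> (G - g) - r * b * n powr \<alpha> \<le> g \<bullet> ?C"
    unfolding r_def by (simp add: inner_diff_right power2_norm_eq_inner mult_ac)
  have "\<kappa> / 2 * (norm ?C)^2 \<le> \<kappa> / 2 * (2 * r^2 + 4 * d * \<tau> powr (2 - \<alpha>) * n powr \<alpha>)"
    using norm_spec_clip_squared_le_perturbed[of \<tau> \<alpha> G g] spec_clip_eq_self[OF g_ball] tau alpha kappa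
    unfolding r_def n_def d_def by (intro mult_left_mono) simp_all
  also have "\<dots> = \<kappa> * r^2 + cQ * n powr \<alpha>"
    unfolding cQ_def d_def by (simp add: algebra_simps)
  finally have quadratic: "\<kappa> / 2 * (norm ?C)^2 \<le> \<kappa> * r^2 + cQ * n powr \<alpha>" .
  have "\<kappa> * r^2 \<le> r^2 / 4"
    using norm_spec_clip_squared_le_min[of \<tau> \<kappa> g] spec_clip_eq_self[OF g_ball] small tau kappa
    unfolding r_def d_def by (simp add: power2_eq_square)
  moreover have "r * (b * \<sigma> powr \<alpha>) \<le> r^2 / 2 + 2 * T"
    using sum_squares_bound[of r "b * \<sigma> powr \<alpha>"] half_powr_mult_powr_squared_le[OF tau sigma alpha]
    unfolding b_def T_def by (simp add: power2_eq_square algebra_simps)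
  moreover have "(r * b + cQ) * (\<sigma> powr \<alpha> - n powr \<alpha>)
      = r * (b * \<sigma> powr \<alpha>) - r * b * n powr \<alpha> + cQ * \<sigma> powr \<alpha> - cQ * n powr \<alpha>"
    by (simp add: algebra_simps)
  ultimately show ?thesis
    using linear quadratic phi_le(2)[of r]
    unfolding descent_gain_def r_def[symmetric] n_def[symmetric] b_def[symmetric] by linarith
qed

lemma descent_gain_large_gradient:
  fixes g G :: "real^'n^'m" and \<tau> \<sigma> \<alpha> \<kappa> :: real
  defines "d \<equiv> real (min CARD('m) CARD('n))"
    and "cQ \<equiv> 2 * \<kappa> * real (min CARD('m) CARD('n)) * \<tau> powr (2 - \<alpha>)"
  assumes large: "\<tau> / 2 < norm g"
    and tau: "2 \<le> \<tau>" "8 * \<sigma> \<le> \<tau>" and sigma: "0 < \<sigma>" and alpha: "1 \<le> \<alpha>" "\<alpha> \<le> 2"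
    and kappa: "0 \<le> \<kappa>" "4 * d * \<kappa> \<le> 1"
  shows "phi (norm g) / 4 - cQ * \<sigma> powr \<alpha>
      + (norm g * \<sigma> powr (1 - \<alpha>) + cQ) * (\<sigma> powr \<alpha> - norm (G - g) powr \<alpha>)
    \<le> descent_gain \<tau> \<kappa> g G"
proof -
  let ?C = "spec_clip \<tau> G" and ?P = "spec_clip \<tau> g"
  define r where "r = norm g"
  define n where "n = norm (G - g)"
  define m where "m = min r \<tau>"
  have "0 \<le> \<tau>" "0 < \<tau>" "0 \<le> r" using tau unfolding r_def by auto
  have "\<tau> / 2 \<le> m" using large tau unfolding m_def r_def by auto
  have aligned: "r * m \<le> g \<bullet> ?P"
    unfolding r_def m_def by (rule inner_spec_clip_ge[OF \<open>0 \<le> \<tau>\<close>])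
  have "\<bar>g \<bullet> (?C - ?P)\<bar> \<le> r * norm (?C - ?P)"
    unfolding r_def by (rule Cauchy_Schwarz_ineq2)
  also have "\<dots> \<le> r * n"
    unfolding n_def using spec_clip_nonexpansive[OF \<open>0 \<le> \<tau>\<close>] \<open>0 \<le> r\<close> by (intro mult_left_mono)
  finally have perturbation: "- (r * n) \<le> g \<bullet> ?C - g \<bullet> ?P"
    by (simp add: inner_diff_right)
  have pruned: "\<kappa> * (norm ?P)^2 \<le> r * m / 4"
    using norm_spec_clip_squared_le_min[OF \<open>0 \<le> \<tau>\<close> kappa[unfolded d_def]] unfolding r_def m_def .
  have "\<kappa> / 2 * (norm ?C)^2
      \<le> \<kappa> / 2 * (2 * (norm ?P)^2 + 4 * d * \<tau> powr (2 - \<alpha>) * n powr \<alpha>)"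
    using norm_spec_clip_squared_le_perturbed[of \<tau> \<alpha> G g] \<open>0 < \<tau>\<close> alpha kappa
    unfolding n_def d_def by (intro mult_left_mono) simp_all
  also have "\<dots> = \<kappa> * (norm ?P)^2 + cQ * n powr \<alpha>"
    unfolding cQ_def d_def by (simp add: algebra_simps)
  finally have quadratic: "\<kappa> / 2 * (norm ?C)^2 \<le> \<kappa> * (norm ?P)^2 + cQ * n powr \<alpha>" .
  have sigma_split: "\<sigma> powr (1 - \<alpha>) * \<sigma> powr \<alpha> = \<sigma>"
    using sigma by (simp flip: powr_add)
  have "r * n \<le> r * (\<sigma> + n powr \<alpha> * \<sigma> powr (1 - \<alpha>))"
    using le_add_powr_mult_powr_one_minus[of n \<sigma> \<alpha>] sigma alpha \<open>0 \<le> r\<close>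
    unfolding n_def by (intro mult_left_mono) simp_all
  moreover have "(r * \<sigma> powr (1 - \<alpha>) + cQ) * (\<sigma> powr \<alpha> - n powr \<alpha>)
      = r * \<sigma> - r * (n powr \<alpha> * \<sigma> powr (1 - \<alpha>)) + cQ * \<sigma> powr \<alpha> - cQ * n powr \<alpha>"
    using sigma_split by (simp add: algebra_simps)
  moreover have "phi r / 4 + 2 * (r * \<sigma>) \<le> 3 / 4 * (r * m)"
    using phi_le(1)[of r] mult_left_mono[OF \<open>\<tau> / 2 \<le> m\<close> \<open>0 \<le> r\<close>]
      mult_left_mono[OF tau(2) \<open>0 \<le> r\<close>] mult_left_mono[OF tau(1) \<open>0 \<le> r\<close>] by linarith
  ultimately show ?thesis
    using aligned perturbation pruned quadratic
    unfolding descent_gain_def r_def[symmetric] n_def[symmetric] by (simp add: distrib_left)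
qed

lemma descent_gain_lower_bound:
  fixes g G :: "real^'n^'m" and \<tau> \<sigma> \<alpha> \<kappa> :: real
  defines "d \<equiv> real (min CARD('m) CARD('n))"
    and "cQ \<equiv> 2 * \<kappa> * real (min CARD('m) CARD('n)) * \<tau> powr (2 - \<alpha>)"
    and "T \<equiv> \<tau> powr (- 2 * (\<alpha> - 1)) * \<sigma> powr (2 * \<alpha>)"
  assumes tau: "2 \<le> \<tau>" "8 * \<sigma> \<le> \<tau>" and sigma: "0 < \<sigma>" and alpha: "1 \<le> \<alpha>" "\<alpha> \<le> 2"
    and kappa: "0 \<le> \<kappa>" "4 * d * \<kappa> \<le> 1"
  shows "phi (norm g) / 4 - (2 * T + cQ * \<sigma> powr \<alpha>)
      + (if norm g \<le> \<tau> / 2 then g else 0) \<bullet> (G - g)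
      + ((if norm g \<le> \<tau> / 2 then norm g * (\<tau> / 2) powr (1 - \<alpha>) else norm g * \<sigma> powr (1 - \<alpha>)) + cQ)
        * (\<sigma> powr \<alpha> - norm (G - g) powr \<alpha>)
    \<le> descent_gain \<tau> \<kappa> g G"
proof (cases "norm g \<le> \<tau> / 2")
  case True
  then show ?thesis
    using descent_gain_small_gradient[where G = G, OF True] tau sigma alpha kappa
    unfolding d_def cQ_def T_def by simp
next
  case False
  then have if_large: "(if norm g \<le> \<tau> / 2 then g else 0) \<bullet> (G - g) = 0"
    "(if norm g \<le> \<tau> / 2 then norm g * (\<tau> / 2) powr (1 - \<alpha>) else norm g * \<sigma> powr (1 - \<alpha>))
      = norm g * \<sigma> powr (1 - \<alpha>)"
    by simp_all
  moreover have "0 \<le> T" unfolding T_def by simp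
  moreover have "phi (norm g) / 4 - cQ * \<sigma> powr \<alpha>
      + (norm g * \<sigma> powr (1 - \<alpha>) + cQ) * (\<sigma> powr \<alpha> - norm (G - g) powr \<alpha>)
    \<le> descent_gain \<tau> \<kappa> g G"
    using descent_gain_large_gradient[where G = G and g = g] False tau sigma alpha kappa
    unfolding d_def cQ_def by simp
  ultimately show ?thesis unfolding if_large by linarith
qed

section \<open>Expected descent\<close>

lemma gderiv_borel_measurable:
  fixes f :: "'a::euclidean_space \<Rightarrow> real"
  assumes "\<And>x. GDERIV f x :> grad x"
  shows "grad \<in> borel_measurable borel"
proof -
  have deriv: "(f has_derivative (\<lambda>h. h \<bullet> grad x)) (at x)" for x
    using assms unfolding gderiv_def .
  then have "continuous_on UNIV f"
    by (meson continuous_at_imp_continuous_on has_derivative_continuous)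
  have "(\<lambda>x. e \<bullet> grad x) \<in> borel_measurable borel" for e
  proof (rule borel_measurable_LIMSEQ_real)
    fix x
    have "((\<lambda>t. x + t *\<^sub>R e) has_derivative (\<lambda>t. t *\<^sub>R e)) (at 0)"
      by (auto intro!: derivative_eq_intros)
    moreover have "(f has_derivative (\<lambda>h. h \<bullet> grad x)) (at ((\<lambda>t. x + t *\<^sub>R e) 0))"
      using deriv[of x] by simp
    ultimately have "((\<lambda>t. f (x + t *\<^sub>R e)) has_derivative (\<lambda>t. (t *\<^sub>R e) \<bullet> grad x)) (at 0)"
      by (rule has_derivative_compose)
    moreover have "(\<lambda>t. (t *\<^sub>R e) \<bullet> grad x) = (*) (e \<bullet> grad x)" by (auto simp: mult.commute)
    ultimately have "((\<lambda>t. f (x + t *\<^sub>R e)) has_field_derivative e \<bullet> grad x) (at 0)"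
      unfolding has_field_derivative_def by simp
    then have "((\<lambda>t. (f (x + t *\<^sub>R e) - f x) / t) \<longlongrightarrow> e \<bullet> grad x) (at 0)"
      unfolding DERIV_def by simp
    moreover have "filterlim (\<lambda>k. inverse (real (Suc k))) (at 0) sequentially"
      unfolding filterlim_at using LIMSEQ_inverse_real_of_nat by auto
    ultimately show "(\<lambda>k. (f (x + inverse (real (Suc k)) *\<^sub>R e) - f x) / inverse (real (Suc k)))
        \<longlonglongrightarrow> e \<bullet> grad x"
      by (rule filterlim_compose[where g = "\<lambda>t. (f (x + t *\<^sub>R e) - f x) / t"])
  next
    fix k
    show "(\<lambda>x. (f (x + inverse (real (Suc k)) *\<^sub>R e) - f x) / inverse (real (Suc k))) \<in> borel_measurable borel"
      by (intro borel_measurable_continuous_onI continuous_intros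
          continuous_on_compose2[OF \<open>continuous_on UNIV f\<close>]) auto
  qed
  then show ?thesis
    by (subst borel_measurable_euclidean_space) (simp add: inner_commute)
qed

lemma borel_measurable_matrix_entry [measurable (raw)]:
  fixes Y :: "'a \<Rightarrow> real^'n^'m"
  assumes "Y \<in> borel_measurable M"
  shows "(\<lambda>x. Y x $ i $ j) \<in> borel_measurable M"
proof -
  have "(\<lambda>A::real^'n^'m. A $ i $ j) \<in> borel_measurable borel"
    by (intro borel_measurable_continuous_onI continuous_intros)
  then show ?thesis using assms by measurable
qed

lemma norm_le_sum_abs_matrix_entries: "norm (A::real^'n^'m) \<le> (\<Sum>i\<in>UNIV. \<Sum>j\<in>UNIV. \<bar>A $ i $ j\<bar>)"
proof -
  have "norm A \<le> (\<Sum>i\<in>UNIV. norm (A $ i))" unfolding norm_vec_def by (rule L2_set_le_sum) simp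
  also have "\<dots> \<le> (\<Sum>i\<in>UNIV. \<Sum>j\<in>UNIV. \<bar>A $ i $ j\<bar>)" by (intro sum_mono norm_le_l1_cart)
  finally show ?thesis .
qed

lemma integrable_norm_of_integrable_entries:
  fixes Y :: "'a \<Rightarrow> real^'n^'m"
  assumes "Y \<in> borel_measurable M" and "\<And>i j. integrable M (\<lambda>x. Y x $ i $ j)"
  shows "integrable M (\<lambda>x. norm (Y x))"
proof (rule Bochner_Integration.integrable_bound)
  show "integrable M (\<lambda>x. \<Sum>i\<in>UNIV. \<Sum>j\<in>UNIV. \<bar>Y x $ i $ j\<bar>)"
    using assms(2) by (intro Bochner_Integration.integrable_sum integrable_abs)
  show "AE x in M. norm (norm (Y x)) \<le> norm (\<Sum>i\<in>UNIV. \<Sum>j\<in>UNIV. \<bar>Y x $ i $ j\<bar>)"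
    using norm_le_sum_abs_matrix_entries by (intro AE_I2) (simp add: sum_nonneg order_trans[OF _ abs_ge_self])
qed (use assms(1) in measurable)

lemma integrable_bounded_mult:
  fixes a Z :: "'a \<Rightarrow> real"
  assumes "integrable M Z" "a \<in> borel_measurable M" "\<And>x. \<bar>a x\<bar> \<le> B"
  shows "integrable M (\<lambda>x. a x * Z x)"
proof (rule Bochner_Integration.integrable_bound)
  show "integrable M (\<lambda>x. B * \<bar>Z x\<bar>)" using assms(1) by (intro integrable_mult_right integrable_abs)
  show "AE x in M. norm (a x * Z x) \<le> norm (B * \<bar>Z x\<bar>)"
    using assms(3) by (intro AE_I2) (simp add: abs_mult mult_right_mono order_trans[OF _ abs_ge_self])
qed (use assms in measurable)

lemma (in sigma_finite_subalgebra) integrable_if_real_cond_exp_AE_eq: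
  assumes "integrable M f" "g \<in> borel_measurable M" "AE x in M. real_cond_exp M F f x = g x"
  shows "integrable M g"
  using integrable_cong_AE[of "real_cond_exp M F f" M g] real_cond_exp_int(1)[OF assms(1)] assms(2,3)
  by simp

lemma (in sigma_finite_subalgebra) integral_inner_centered_eq_0:
  fixes a G g :: "'a \<Rightarrow> real^'n^'m"
  assumes a: "a \<in> borel_measurable F" "\<And>x. norm (a x) \<le> B"
    and G: "G \<in> borel_measurable M" "\<And>i j. integrable M (\<lambda>x. G x $ i $ j)"
    and g: "g \<in> borel_measurable M"
    and cond: "\<And>i j. AE x in M. real_cond_exp M F (\<lambda>x. G x $ i $ j) x = g x $ i $ j"
  shows "integrable M (\<lambda>x. a x \<bullet> (G x - g x))" and "(\<integral>x. a x \<bullet> (G x - g x) \<partial>M) = 0"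
proof -
  note [measurable] = a(1) G(1) g measurable_from_subalg[OF subalg a(1)]
  have entry: "\<bar>a x $ i $ j\<bar> \<le> B" for x i j
    using component_le_norm_cart[of "a x $ i" j] Finite_Cartesian_Product.norm_nth_le[of "a x" i] a(2)[of x]
    by linarith
  have g_int: "integrable M (\<lambda>x. g x $ i $ j)" for i j
    using cond by (intro integrable_if_real_cond_exp_AE_eq[OF G(2)]) measurable
  have aG: "integrable M (\<lambda>x. a x $ i $ j * G x $ i $ j)" for i j
    using G(2) entry by (intro integrable_bounded_mult) simp_all
  have ag: "integrable M (\<lambda>x. a x $ i $ j * g x $ i $ j)" for i j
    using g_int entry by (intro integrable_bounded_mult) simp_all
  have tower: "(\<integral>x. a x $ i $ j * G x $ i $ j \<partial>M) = (\<integral>x. a x $ i $ j * g x $ i $ j \<partial>M)" for i j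
  proof -
    have "(\<integral>x. a x $ i $ j * G x $ i $ j \<partial>M) = (\<integral>x. a x $ i $ j * real_cond_exp M F (\<lambda>x. G x $ i $ j) x \<partial>M)"
      by (rule real_cond_exp_intg(2)[OF aG, symmetric]) measurable
    also have "\<dots> = (\<integral>x. a x $ i $ j * g x $ i $ j \<partial>M)"
      using cond[of i j] by (intro integral_cong_AE) (measurable, auto)
    finally show ?thesis .
  qed
  have expand: "a x \<bullet> (G x - g x) = (\<Sum>i\<in>UNIV. \<Sum>j\<in>UNIV. a x $ i $ j * G x $ i $ j - a x $ i $ j * g x $ i $ j)" for x
    by (simp add: inner_vec_def algebra_simps sum_subtractf)
  show "integrable M (\<lambda>x. a x \<bullet> (G x - g x))"
    unfolding expand using aG ag by (intro Bochner_Integration.integrable_sum Bochner_Integration.integrable_diff)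
  show "(\<integral>x. a x \<bullet> (G x - g x) \<partial>M) = 0"
    unfolding expand using aG ag tower
    by (simp add: Bochner_Integration.integral_sum Bochner_Integration.integral_diff
        Bochner_Integration.integrable_sum Bochner_Integration.integrable_diff)
qed

lemma (in sigma_finite_subalgebra) integral_mult_le_of_nn_cond_exp_le:
  fixes w Z :: "'a \<Rightarrow> real"
  assumes w: "w \<in> borel_measurable F" "integrable M w" "\<And>x. 0 \<le> w x"
    and Z: "Z \<in> borel_measurable M" "\<And>x. 0 \<le> Z x"
    and bound: "AE x in M. nn_cond_exp M F (\<lambda>x. ennreal (Z x)) x \<le> ennreal c" and "0 \<le> c"
  shows "integrable M (\<lambda>x. w x * Z x)" and "(\<integral>x. w x * Z x \<partial>M) \<le> (\<integral>x. w x * c \<partial>M)"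
proof -
  note [measurable] = w(1) Z(1) measurable_from_subalg[OF subalg w(1)]
  have wc_int: "integrable M (\<lambda>x. w x * c)" using w(2) by (rule integrable_mult_left)
  have "(\<integral>\<^sup>+x. ennreal (w x * Z x) \<partial>M) = (\<integral>\<^sup>+x. ennreal (w x) * ennreal (Z x) \<partial>M)"
    using w(3) Z(2) by (intro nn_integral_cong) (simp add: ennreal_mult)
  also have "\<dots> = (\<integral>\<^sup>+x. ennreal (w x) * nn_cond_exp M F (\<lambda>x. ennreal (Z x)) x \<partial>M)"
    by (rule nn_cond_exp_intg[symmetric]) measurable
  also have "\<dots> \<le> (\<integral>\<^sup>+x. ennreal (w x) * ennreal c \<partial>M)"
    using bound by (intro nn_integral_mono_AE) (auto elim!: eventually_mono intro: mult_left_mono)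
  also have "\<dots> = ennreal (\<integral>x. w x * c \<partial>M)"
    using w(3) \<open>0 \<le> c\<close> wc_int
    by (subst nn_integral_eq_integral[symmetric]) (auto intro!: nn_integral_cong simp: ennreal_mult)
  finally have le: "(\<integral>\<^sup>+x. ennreal (w x * Z x) \<partial>M) \<le> ennreal (\<integral>x. w x * c \<partial>M)" .
  show int: "integrable M (\<lambda>x. w x * Z x)"
    using le w(3) Z(2) by (intro integrableI_nonneg) (auto simp: top.not_eq_extremum le_less_trans)
  have "ennreal (\<integral>x. w x * Z x \<partial>M) = (\<integral>\<^sup>+x. ennreal (w x * Z x) \<partial>M)"
    using w(3) Z(2) by (intro nn_integral_eq_integral[symmetric] int) simp
  moreover have "0 \<le> (\<integral>x. w x * c \<partial>M)"
    using w(3) \<open>0 \<le> c\<close> by (intro integral_nonneg_AE) simp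
  ultimately show "(\<integral>x. w x * Z x \<partial>M) \<le> (\<integral>x. w x * c \<partial>M)"
    using le ennreal_le_iff by metis
qed

lemma (in finite_measure) integrable_descent_gain:
  fixes g G :: "'a \<Rightarrow> real^'n^'m"
  assumes "0 \<le> \<tau>" and [measurable]: "g \<in> borel_measurable M" "G \<in> borel_measurable M"
    and "integrable M (\<lambda>x. norm (g x))"
  shows "integrable M (\<lambda>x. descent_gain \<tau> \<kappa> (g x) (G x))"
proof (rule Bochner_Integration.integrable_bound)
  define D where "D = sqrt (real (min CARD('m) CARD('n))) * \<tau>"
  show "integrable M (\<lambda>x. norm (g x) * D + \<bar>\<kappa>\<bar> / 2 * D^2)"
    using assms(4) by (intro Bochner_Integration.integrable_add integrable_mult_left) auto
  show "AE x in M. norm (descent_gain \<tau> \<kappa> (g x) (G x)) \<le> norm (norm (g x) * D + \<bar>\<kappa>\<bar> / 2 * D^2)"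
  proof (intro AE_I2)
    fix x
    have C: "norm (spec_clip \<tau> (G x)) \<le> D"
      unfolding D_def by (rule norm_spec_clip_le_sqrt[OF assms(1)])
    have "\<bar>g x \<bullet> spec_clip \<tau> (G x)\<bar> \<le> norm (g x) * D"
      using Cauchy_Schwarz_ineq2[of "g x" "spec_clip \<tau> (G x)"] mult_left_mono[OF C norm_ge_zero[of "g x"]]
      by linarith
    moreover have "\<bar>\<kappa> / 2 * (norm (spec_clip \<tau> (G x)))^2\<bar> \<le> \<bar>\<kappa>\<bar> / 2 * D^2"
      using power_mono[OF C norm_ge_zero, of 2] by (simp add: abs_mult mult_left_mono)
    ultimately show "norm (descent_gain \<tau> \<kappa> (g x) (G x)) \<le> norm (norm (g x) * D + \<bar>\<kappa>\<bar> / 2 * D^2)"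
      unfolding descent_gain_def by simp
  qed
  have [measurable]: "spec_clip \<tau> \<in> borel_measurable borel"
    by (rule spec_clip_borel_measurable[OF assms(1)])
  show "(\<lambda>x. descent_gain \<tau> \<kappa> (g x) (G x)) \<in> borel_measurable M"
    unfolding descent_gain_def by measurable
qed

lemma (in sigma_finite_subalgebra) integral_mono_modulo_conditional_terms:
  fixes a G g :: "'a \<Rightarrow> real^'n^'m" and p h w Z :: "'a \<Rightarrow> real"
  assumes "integrable M p" "integrable M h"
    and a: "a \<in> borel_measurable F" "\<And>x. norm (a x) \<le> A"
    and G: "G \<in> borel_measurable M" "\<And>i j. integrable M (\<lambda>x. G x $ i $ j)"
    and g: "g \<in> borel_measurable M"
    and unbiased: "\<And>i j. AE x in M. real_cond_exp M F (\<lambda>x. G x $ i $ j) x = g x $ i $ j"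
    and w: "w \<in> borel_measurable F" "integrable M w" "\<And>x. 0 \<le> w x"
    and Z: "Z \<in> borel_measurable M" "\<And>x. 0 \<le> Z x"
    and moment: "AE x in M. nn_cond_exp M F (\<lambda>x. ennreal (Z x)) x \<le> ennreal c" and "0 \<le> c"
    and pointwise: "\<And>x. x \<in> space M \<Longrightarrow> p x + a x \<bullet> (G x - g x) + w x * (c - Z x) \<le> h x"
  shows "(\<integral>x. p x \<partial>M) \<le> (\<integral>x. h x \<partial>M)"
proof -
  note centered = integral_inner_centered_eq_0[OF a G g unbiased]
  note weighted = integral_mult_le_of_nn_cond_exp_le[OF w Z moment \<open>0 \<le> c\<close>]
  have "(\<integral>x. p x \<partial>M) \<le> (\<integral>x. p x + a x \<bullet> (G x - g x) + (w x * c - w x * Z x) \<partial>M)"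
    using assms(1) centered weighted integrable_mult_left[OF w(2), of c]
    by (simp add: mult.commute)
  also have "\<dots> \<le> (\<integral>x. h x \<partial>M)"
    using assms(1,2) centered(1) weighted(1) integrable_mult_left[OF w(2), of c] pointwise
    by (intro integral_mono) (auto simp: right_diff_distrib mult.commute)
  finally show ?thesis .
qed

lemma (in prob_space) expected_descent_gain_bound:
  fixes X G :: "'a \<Rightarrow> real^'n^'m" and grad :: "real^'n^'m \<Rightarrow> real^'n^'m" and \<tau> \<sigma> \<alpha> \<kappa> :: real
  defines "F \<equiv> vimage_algebra (space M) X borel"
    and "d \<equiv> real (min CARD('m) CARD('n))"
    and "B \<equiv> 2 * (\<tau> powr (- 2 * (\<alpha> - 1)) * \<sigma> powr (2 * \<alpha>))
            + 2 * \<kappa> * real (min CARD('m) CARD('n)) * \<tau> powr (2 - \<alpha>) * \<sigma> powr \<alpha>"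
  assumes grad [measurable]: "grad \<in> borel_measurable borel"
    and X [measurable]: "X \<in> borel_measurable M"
    and G [measurable]: "G \<in> borel_measurable M" and G_int: "\<And>i j. integrable M (\<lambda>\<omega>. G \<omega> $ i $ j)"
    and unbiased: "\<And>i j. AE \<omega> in M. real_cond_exp M F (\<lambda>\<omega>. G \<omega> $ i $ j) \<omega> = grad (X \<omega>) $ i $ j"
    and moment: "AE \<omega> in M. nn_cond_exp M F (\<lambda>\<omega>. ennreal (norm (G \<omega> - grad (X \<omega>)) powr \<alpha>)) \<omega>
        \<le> ennreal (\<sigma> powr \<alpha>)"
    and tau: "2 \<le> \<tau>" "8 * \<sigma> \<le> \<tau>" and sigma: "0 < \<sigma>" and alpha: "1 \<le> \<alpha>" "\<alpha> \<le> 2"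
    and kappa: "0 \<le> \<kappa>" "4 * d * \<kappa> \<le> 1"
  shows "integrable M (\<lambda>\<omega>. descent_gain \<tau> \<kappa> (grad (X \<omega>)) (G \<omega>))"
    and "(\<integral>\<omega>. phi (norm (grad (X \<omega>))) \<partial>M)
      \<le> 4 * (\<integral>\<omega>. descent_gain \<tau> \<kappa> (grad (X \<omega>)) (G \<omega>) \<partial>M) + 4 * B"
proof -
  interpret S: finite_measure_subalgebra M F
    by unfold_locales (use sets_image_in_sets[of M "space M" X borel] in \<open>simp add: subalgebra_def F_def\<close>)
  define g where "g \<omega> = grad (X \<omega>)" for \<omega>
  define cQ where "cQ = 2 * \<kappa> * d * \<tau> powr (2 - \<alpha>)"
  define w where "w \<omega> = (if norm (g \<omega>) \<le> \<tau> / 2 then norm (g \<omega>) * (\<tau> / 2) powr (1 - \<alpha>)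
      else norm (g \<omega>) * \<sigma> powr (1 - \<alpha>)) + cQ" for \<omega>
  have "X \<in> measurable F borel"
    unfolding F_def by (rule measurable_vimage_algebra1) simp
  then have g_F [measurable]: "g \<in> borel_measurable F"
    unfolding g_def by measurable
  have g_M [measurable]: "g \<in> borel_measurable M" unfolding g_def by measurable
  have "integrable M (\<lambda>\<omega>. g \<omega> $ i $ j)" for i j
    using unbiased[of i j] unfolding g_def[symmetric]
    by (intro S.integrable_if_real_cond_exp_AE_eq[OF G_int]) measurable
  then have g_int: "integrable M (\<lambda>\<omega>. norm (g \<omega>))"
    by (intro integrable_norm_of_integrable_entries) measurable
  have gain_int: "integrable M (\<lambda>\<omega>. descent_gain \<tau> \<kappa> (g \<omega>) (G \<omega>))"
    using tau g_int by (intro integrable_descent_gain) simp_all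
  then show "integrable M (\<lambda>\<omega>. descent_gain \<tau> \<kappa> (grad (X \<omega>)) (G \<omega>))"
    unfolding g_def .
  have phi_int: "integrable M (\<lambda>\<omega>. phi (norm (g \<omega>)))"
    using g_int by (rule Bochner_Integration.integrable_bound) (auto simp: phi_def)
  then have phi_shift_int: "integrable M (\<lambda>\<omega>. phi (norm (g \<omega>)) / 4 - B)" by simp
  have "0 \<le> cQ" unfolding cQ_def d_def using kappa tau by simp
  have a_F: "(\<lambda>\<omega>. if norm (g \<omega>) \<le> \<tau> / 2 then g \<omega> else 0) \<in> borel_measurable F" by measurable
  have w_nonneg: "0 \<le> w \<omega>" for \<omega> using \<open>0 \<le> cQ\<close> by (simp add: w_def)
  have w_F [measurable]: "w \<in> borel_measurable F" unfolding w_def by measurable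
  have w_M [measurable]: "w \<in> borel_measurable M" unfolding w_def by measurable
  have w_int: "integrable M w"
  proof (rule Bochner_Integration.integrable_bound)
    show "integrable M (\<lambda>\<omega>. norm (g \<omega>) * ((\<tau> / 2) powr (1 - \<alpha>) + \<sigma> powr (1 - \<alpha>)) + cQ)"
      using g_int by (intro Bochner_Integration.integrable_add integrable_mult_left) auto
    show "AE \<omega> in M. norm (w \<omega>) \<le> norm (norm (g \<omega>) * ((\<tau> / 2) powr (1 - \<alpha>) + \<sigma> powr (1 - \<alpha>)) + cQ)"
      using \<open>0 \<le> cQ\<close> by (intro AE_I2) (auto simp: w_def distrib_left)
  qed measurable
  have "(\<integral>\<omega>. phi (norm (g \<omega>)) \<partial>M) / 4 - B = (\<integral>\<omega>. phi (norm (g \<omega>)) / 4 - B \<partial>M)"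
    using phi_int by (simp add: prob_space)
  also have "\<dots> \<le> (\<integral>\<omega>. descent_gain \<tau> \<kappa> (g \<omega>) (G \<omega>) \<partial>M)"
  proof (rule S.integral_mono_modulo_conditional_terms[where a = "\<lambda>\<omega>. if norm (g \<omega>) \<le> \<tau> / 2 then g \<omega> else 0"
        and A = "\<tau> / 2" and G = G and g = g and w = w and Z = "\<lambda>\<omega>. norm (G \<omega> - g \<omega>) powr \<alpha>"
        and c = "\<sigma> powr \<alpha>"])
    show "AE \<omega> in M. real_cond_exp M F (\<lambda>\<omega>. G \<omega> $ i $ j) \<omega> = g \<omega> $ i $ j" for i j
      using unbiased unfolding g_def .
    show "AE \<omega> in M. nn_cond_exp M F (\<lambda>\<omega>. ennreal (norm (G \<omega> - g \<omega>) powr \<alpha>)) \<omega> \<le> ennreal (\<sigma> powr \<alpha>)"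
      using moment unfolding g_def .
    show "phi (norm (g \<omega>)) / 4 - B + (if norm (g \<omega>) \<le> \<tau> / 2 then g \<omega> else 0) \<bullet> (G \<omega> - g \<omega>)
        + w \<omega> * (\<sigma> powr \<alpha> - norm (G \<omega> - g \<omega>) powr \<alpha>) \<le> descent_gain \<tau> \<kappa> (g \<omega>) (G \<omega>)" for \<omega>
      using descent_gain_lower_bound[of \<tau> \<sigma> \<alpha> \<kappa> "g \<omega>" "G \<omega>"] tau sigma alpha kappa
      unfolding B_def w_def cQ_def d_def by simp
  qed (use phi_shift_int gain_int w_int G_int w_nonneg a_F tau in auto)
  finally show "(\<integral>\<omega>. phi (norm (grad (X \<omega>))) \<partial>M)
      \<le> 4 * (\<integral>\<omega>. descent_gain \<tau> \<kappa> (grad (X \<omega>)) (G \<omega>) \<partial>M) + 4 * B"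
    unfolding g_def by simp
qed

lemma smooth_descent_step:
  fixes f :: "'a::real_inner \<Rightarrow> real"
  assumes "\<And>A B. f A \<le> f B + grad B \<bullet> (A - B) + L / 2 * (norm (A - B))\<^sup>2"
  shows "\<eta> * (grad X \<bullet> C - L * \<eta> / 2 * (norm C)^2) \<le> f X - f (X - \<eta> *\<^sub>R C)"
proof -
  have "f (X - \<eta> *\<^sub>R C) \<le> f X + grad X \<bullet> (- (\<eta> *\<^sub>R C)) + L / 2 * (norm (- (\<eta> *\<^sub>R C)))^2"
    using assms[of "X - \<eta> *\<^sub>R C" X] by simp
  then show ?thesis by (simp add: power_mult_distrib power2_eq_square algebra_simps)
qed

lemma (in prob_space) Min_integral_le_of_telescoping:
  fixes p h V :: "nat \<Rightarrow> 'a \<Rightarrow> real"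
  assumes h_int: "\<And>k. integrable M (h k)"
    and bound: "\<And>k. (\<integral>\<omega>. p k \<omega> \<partial>M) \<le> c * (\<integral>\<omega>. h k \<omega> \<partial>M) + B"
    and descent: "\<And>k \<omega>. \<omega> \<in> space M \<Longrightarrow> \<eta> * h k \<omega> \<le> V k \<omega> - V (Suc k) \<omega>"
    and total: "\<And>\<omega>. \<omega> \<in> space M \<Longrightarrow> V 0 \<omega> - V K \<omega> \<le> \<Delta>"
    and "0 < \<eta>" "0 \<le> c" "0 < K"
  shows "Min ((\<lambda>k. \<integral>\<omega>. p k \<omega> \<partial>M) ` {..<K}) \<le> c * \<Delta> / (\<eta> * K) + B"
proof -
  have pathwise: "\<eta> * (\<Sum>k<K. h k \<omega>) \<le> \<Delta>" if "\<omega> \<in> space M" for \<omega>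
  proof -
    have "\<eta> * (\<Sum>k<K. h k \<omega>) \<le> (\<Sum>k<K. V k \<omega> - V (Suc k) \<omega>)"
      unfolding sum_distrib_left using descent[OF that] by (rule sum_mono)
    also have "\<dots> = V 0 \<omega> - V K \<omega>" by (rule sum_lessThan_telescope')
    finally show ?thesis using total[OF that] by simp
  qed
  have "\<eta> * (\<Sum>k<K. \<integral>\<omega>. h k \<omega> \<partial>M) = (\<integral>\<omega>. \<eta> * (\<Sum>k<K. h k \<omega>) \<partial>M)"
    using h_int by (simp add: Bochner_Integration.integral_sum)
  also have "\<dots> \<le> (\<integral>\<omega>. \<Delta> \<partial>M)"
    using h_int pathwise by (intro integral_mono) auto
  finally have sum_h: "(\<Sum>k<K. \<integral>\<omega>. h k \<omega> \<partial>M) \<le> \<Delta> / \<eta>"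
    using \<open>0 < \<eta>\<close> by (simp add: prob_space field_simps)
  let ?m = "Min ((\<lambda>k. \<integral>\<omega>. p k \<omega> \<partial>M) ` {..<K})"
  have "real K * ?m \<le> (\<Sum>k<K. \<integral>\<omega>. p k \<omega> \<partial>M)"
    using sum_bounded_below[of "{..<K}" ?m "\<lambda>k. \<integral>\<omega>. p k \<omega> \<partial>M"] by simp
  also have "\<dots> \<le> (\<Sum>k<K. c * (\<integral>\<omega>. h k \<omega> \<partial>M) + B)"
    using bound by (rule sum_mono)
  also have "\<dots> = c * (\<Sum>k<K. \<integral>\<omega>. h k \<omega> \<partial>M) + real K * B"
    by (simp add: sum.distrib sum_distrib_left)
  also have "\<dots> \<le> c * (\<Delta> / \<eta>) + real K * B"
    using mult_left_mono[OF sum_h \<open>0 \<le> c\<close>] by simp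
  also have "\<dots> = real K * (c * \<Delta> / (\<eta> * K) + B)"
    using \<open>0 < K\<close> by (simp add: field_simps)
  finally show ?thesis
    using \<open>0 < K\<close> by simp
qed

theorem theorem2:
  fixes f :: "real^'n::finite^'m::finite \<Rightarrow> real"
    and grad :: "real^'n^'m \<Rightarrow> real^'n^'m"
    and M :: "'w measure"
    and X G :: "nat \<Rightarrow> 'w \<Rightarrow> real^'n^'m"
    and X0 :: "real^'n^'m"
    and L \<alpha> \<sigma> \<eta> \<tau> :: real and K :: nat
  assumes grad: "\<And>Y. GDERIV f Y :> grad Y"
    and smooth: "\<And>A B. f A \<le> f B + grad B \<bullet> (A - B) + L / 2 * (norm (A - B))\<^sup>2"
    and L_pos: "L > 0"
    and bdd: "bdd_below (range f)"
    and alpha: "1 < \<alpha>" "\<alpha> \<le> 2"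
    and sigma: "\<sigma> > 0"
    and prob: "prob_space M"
    and X0: "\<And>\<omega>. \<omega> \<in> space M \<Longrightarrow> X 0 \<omega> = X0"
    and step: "\<And>k \<omega>. \<omega> \<in> space M \<Longrightarrow> X (Suc k) \<omega> = X k \<omega> - \<eta> *\<^sub>R spec_clip \<tau> (G k \<omega>)"
    and X_meas: "\<And>k. X k \<in> borel_measurable M"
    and G_meas: "\<And>k. G k \<in> borel_measurable M"
    and G_int: "\<And>k i j. integrable M (\<lambda>\<omega>. G k \<omega> $ i $ j)"
    and unbiased: "\<And>k i j. AE \<omega> in M.
        real_cond_exp M (vimage_algebra (space M) (X k) borel) (\<lambda>\<omega>. G k \<omega> $ i $ j) \<omega>
          = grad (X k \<omega>) $ i $ j"
    and moment: "\<And>k. AE \<omega> in M.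
        nn_cond_exp M (vimage_algebra (space M) (X k) borel)
          (\<lambda>\<omega>. ennreal (norm (G k \<omega> - grad (X k \<omega>)) powr \<alpha>)) \<omega> \<le> ennreal (\<sigma> powr \<alpha>)"
    and eta_pos: "\<eta> > 0"
    and eta: "\<eta> \<le> 1 / (4 * real (min CARD('m) CARD('n)) * L)"
    and tau: "\<tau> \<ge> max 2 (8 * \<sigma>)"
    and K: "K \<ge> 1"
  shows "Min ((\<lambda>k. integral\<^sup>L M (\<lambda>\<omega>. phi (norm (grad (X k \<omega>))))) ` {..<K})
      \<le> 4 * (f X0 - Inf (range f)) / (\<eta> * real K)
        + 32 * \<tau> powr (- 2 * (\<alpha> - 1)) * \<sigma> powr (2 * \<alpha>)
        + 8 * \<eta> * real (min CARD('m) CARD('n)) * L * \<tau> powr (2 - \<alpha>) * \<sigma> powr \<alpha>"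
proof -
  interpret prob_space M by (rule prob)
  define d where "d = real (min CARD('m) CARD('n))"
  define T where "T = \<tau> powr (- 2 * (\<alpha> - 1)) * \<sigma> powr (2 * \<alpha>)"
  have "0 < d" unfolding d_def by simp
  then have kappa: "0 \<le> L * \<eta>" "4 * d * (L * \<eta>) \<le> 1"
    using eta L_pos eta_pos unfolding d_def by (auto simp: field_simps)
  note gain = expected_descent_gain_bound[OF gderiv_borel_measurable[OF grad] X_meas G_meas G_int
      unbiased moment _ _ sigma _ alpha(2) kappa(1) kappa(2)[unfolded d_def]]
  have "Min ((\<lambda>k. \<integral>\<omega>. phi (norm (grad (X k \<omega>))) \<partial>M) ` {..<K})
      \<le> 4 * (f X0 - Inf (range f)) / (\<eta> * real K) + 4 * (2 * T + 2 * (L * \<eta>) * d * \<tau> powr (2 - \<alpha>) * \<sigma> powr \<alpha>)"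
  proof (rule Min_integral_le_of_telescoping[where h = "\<lambda>k \<omega>. descent_gain \<tau> (L * \<eta>) (grad (X k \<omega>)) (G k \<omega>)"
        and V = "\<lambda>k \<omega>. f (X k \<omega>)"])
    show "\<eta> * descent_gain \<tau> (L * \<eta>) (grad (X k \<omega>)) (G k \<omega>) \<le> f (X k \<omega>) - f (X (Suc k) \<omega>)"
      if "\<omega> \<in> space M" for k \<omega>
      using smooth_descent_step[OF smooth] step[OF that] unfolding descent_gain_def by simp
    show "f (X 0 \<omega>) - f (X K \<omega>) \<le> f X0 - Inf (range f)" if "\<omega> \<in> space M" for \<omega>
      using X0[OF that] cInf_lower[OF _ bdd, of "f (X K \<omega>)"] by simp
  qed (use gain tau alpha eta_pos K in \<open>auto simp: T_def d_def\<close>)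
  \<comment> \<open>the argument gives \<open>8 * T\<close> here; the stated bound has \<open>32 * T\<close>\<close>
  also have "\<dots> \<le> 4 * (f X0 - Inf (range f)) / (\<eta> * real K) + 32 * T
      + 8 * \<eta> * d * L * \<tau> powr (2 - \<alpha>) * \<sigma> powr \<alpha>"
    unfolding T_def by (simp add: algebra_simps)
  finally show ?thesis unfolding T_def d_def by (simp add: mult.assoc)
qed

end
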